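(* In a mirror graph $G$, any two distinct convex cycles intersect in the empty set, in a single vertex, or in a single edge.
   Context: A mirror graph is a finite connected simple graph $G$ admitting a partition $\{E_1,\dots,E_k\}$ of its edges such that for every $i$ there is an automorphism $\alpha_i$ swapping the endpoints of every edge of $E_i$, with $G-E_i$ having exactly two components that $\alpha_i$ maps isomorphically onto each other. A cycle is convex if every shortest path of $G$ between two of its vertices lies on it. *)

theory Defs
  imports Main "HOL-Library.Disjoint_Sets"
begin

definition simple_graph :: "'a set \<Rightarrow> 'a set set \<Rightarrow> bool" where
  "simple_graph V E \<longleftrightarrow> finite V \<and>
     (\<forall>e\<in>E. \<exists>u v. e = {u, v} \<and> u \<noteq> v \<and> u \<in> V \<and> v \<in> V)"

definition walk :: "'a set \<Rightarrow> 'a set set \<Rightarrow> 'a list \<Rightarrow> bool" where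
  "walk V E p \<longleftrightarrow> p \<noteq> [] \<and> set p \<subseteq> V \<and>
     (\<forall>i. Suc i < length p \<longrightarrow> {p ! i, p ! Suc i} \<in> E)"

definition reachable :: "'a set \<Rightarrow> 'a set set \<Rightarrow> 'a \<Rightarrow> 'a \<Rightarrow> bool" where
  "reachable V E u v \<longleftrightarrow> (\<exists>p. walk V E p \<and> hd p = u \<and> last p = v)"

definition connected_graph :: "'a set \<Rightarrow> 'a set set \<Rightarrow> bool" where
  "connected_graph V E \<longleftrightarrow> V \<noteq> {} \<and> (\<forall>u\<in>V. \<forall>v\<in>V. reachable V E u v)"

definition components :: "'a set \<Rightarrow> 'a set set \<Rightarrow> 'a set set" where
  "components V E = (\<lambda>v. {u \<in> V. reachable V E v u}) ` V"

definition automorphism :: "'a set \<Rightarrow> 'a set set \<Rightarrow> ('a \<Rightarrow> 'a) \<Rightarrow> bool" where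
  "automorphism V E f \<longleftrightarrow> bij_betw f V V \<and>
     (\<forall>u\<in>V. \<forall>v\<in>V. {u, v} \<in> E \<longleftrightarrow> {f u, f v} \<in> E)"

definition mirror_graph :: "'a set \<Rightarrow> 'a set set \<Rightarrow> bool" where
  "mirror_graph V E \<longleftrightarrow> simple_graph V E \<and> connected_graph V E \<and>
     (\<exists>P. finite P \<and> partition_on E P \<and>
        (\<forall>Ei\<in>P. \<exists>\<alpha>. automorphism V E \<alpha> \<and>
           (\<forall>u v. {u, v} \<in> Ei \<longrightarrow> \<alpha> u = v) \<and>
           (\<exists>C1 C2. C1 \<noteq> C2 \<and> components V (E - Ei) = {C1, C2} \<and> \<alpha> ` C1 = C2)))"

definition cycle_edges :: "'a list \<Rightarrow> 'a set set" where
  "cycle_edges c = {{c ! i, c ! ((i + 1) mod length c)} | i. i < length c}"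

definition is_cycle :: "'a set \<Rightarrow> 'a set set \<Rightarrow> 'a list \<Rightarrow> bool" where
  "is_cycle V E c \<longleftrightarrow> length c \<ge> 3 \<and> distinct c \<and> set c \<subseteq> V \<and> cycle_edges c \<subseteq> E"

definition dist :: "'a set \<Rightarrow> 'a set set \<Rightarrow> 'a \<Rightarrow> 'a \<Rightarrow> nat" where
  "dist V E u v = (LEAST n. \<exists>p. walk V E p \<and> hd p = u \<and> last p = v \<and> length p = Suc n)"

definition shortest_path :: "'a set \<Rightarrow> 'a set set \<Rightarrow> 'a \<Rightarrow> 'a \<Rightarrow> 'a list \<Rightarrow> bool" where
  "shortest_path V E u v p \<longleftrightarrow> walk V E p \<and> hd p = u \<and> last p = v \<and>
     length p = Suc (dist V E u v)"

definition convex_cycle :: "'a set \<Rightarrow> 'a set set \<Rightarrow> 'a list \<Rightarrow> bool" where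
  "convex_cycle V E c \<longleftrightarrow> is_cycle V E c \<and>
     (\<forall>u\<in>set c. \<forall>v\<in>set c. \<forall>p. shortest_path V E u v p \<longrightarrow>
        set p \<subseteq> set c \<and> (\<forall>i. Suc i < length p \<longrightarrow> {p ! i, p ! Suc i} \<in> cycle_edges c))"

end

theory Submission
  imports Defs
begin

text \<open>
  Let \<open>bc\<close> be an edge and \<open>\<alpha>\<close> the mirror of its class, which swaps the two halves \<open>A\<close>, \<open>B\<close> of
  the graph without that class. A convex cycle through \<open>bc\<close> leaves \<open>A\<close> along \<open>bc\<close> and returns
  along an edge that \<open>\<alpha>\<close> also reflects. Each of the two arcs is at least half the cycle, since
  its mirror image is a walk between cycle vertices that would otherwise be shorter than their
  distance along the cycle; so the two crossings are antipodal. The mirror image of the arc in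
  \<open>A\<close> is then a shortest path between cycle vertices, and by convexity its last edge, which
  joins \<open>c\<close> to the image of the cycle neighbour \<open>a\<close> of \<open>b\<close>, lies on the cycle.

  Consequently, if two convex cycles share a path \<open>a b c\<close>, they also share the edge from \<open>c\<close>
  to \<open>\<alpha> a\<close>, and walking around, they share all edges. Two distinct convex cycles therefore share
  no path with two edges. A shortest path between two common vertices lies on both cycles, so it
  is a single common edge; hence there are at most two common vertices, joined by the only
  common edge.
\<close>

section \<open>Walks, reachability and shortest paths\<close>

lemma walk_Cons_Cons:
  "walk V E (x # y # ys) \<longleftrightarrow> x \<in> V \<and> {x, y} \<in> E \<and> walk V E (y # ys)"
  unfolding walk_def by (auto simp: nth_Cons split: nat.splits)

lemma walk_append:
  assumes "walk V E p" "walk V E q" "last p = hd q"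
  shows "walk V E (p @ tl q)"
  using assms
proof (induction p rule: induct_list012)
  case (2 x)
  then show ?case by (cases q) (auto simp: walk_def)
next
  case (3 x y ys)
  then show ?case by (simp add: walk_Cons_Cons)
qed (simp add: walk_def)

lemma walk_rev: "walk V E p \<Longrightarrow> walk V E (rev p)"
proof (induction p rule: induct_list012)
  case (3 x y ys)
  then have "walk V E (rev (y # ys))" "walk V E [y, x]"
    by (auto simp: walk_Cons_Cons insert_commute) (auto simp: walk_def)
  then have "walk V E (rev (y # ys) @ tl [y, x])"
    by (intro walk_append) auto
  then show ?case by simp
qed simp_all

lemma walk_take: "walk V E p \<Longrightarrow> 0 < n \<Longrightarrow> walk V E (take n p)"
  unfolding walk_def by (auto dest: in_set_takeD)

lemma walk_drop: "walk V E p \<Longrightarrow> n < length p \<Longrightarrow> walk V E (drop n p)"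
  unfolding walk_def by (auto dest: in_set_dropD)

lemma walk_map_automorphism:
  assumes "walk V E p" "automorphism V E \<alpha>" shows "walk V E (map \<alpha> p)"
  using assms unfolding walk_def automorphism_def bij_betw_def by (auto simp: subset_iff)

lemma reachable_refl: "x \<in> V \<Longrightarrow> reachable V E x x"
  unfolding reachable_def by (intro exI[of _ "[x]"]) (simp add: walk_def)

lemma reachable_sym: "reachable V E x y \<Longrightarrow> reachable V E y x"
  unfolding reachable_def by (metis walk_rev hd_rev last_rev)

lemma reachable_trans: "reachable V E x y \<Longrightarrow> reachable V E y z \<Longrightarrow> reachable V E x z"
  unfolding reachable_def
proof (elim exE conjE)
  fix p q assume p: "walk V E p" "hd p = x" "last p = y" and q: "walk V E q" "hd q = y" "last q = z"
  have "p \<noteq> []" "q \<noteq> []" using p q by (auto simp: walk_def)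
  then have "hd (p @ tl q) = x" "last (p @ tl q) = z"
    using p q by (cases q; auto)+
  then show "\<exists>r. walk V E r \<and> hd r = x \<and> last r = z"
    using walk_append[OF p(1) q(1)] p q by auto
qed

lemma reachable_in_V: "reachable V E x y \<Longrightarrow> x \<in> V \<and> y \<in> V"
  unfolding reachable_def walk_def by (auto dest: hd_in_set last_in_set)

lemma reachable_edge: "{x, y} \<in> E \<Longrightarrow> x \<in> V \<Longrightarrow> y \<in> V \<Longrightarrow> reachable V E x y"
  unfolding reachable_def by (intro exI[of _ "[x, y]"]) (simp add: walk_def)

lemma components_eq_quotient:
  "components V E = V // {(x, y). reachable V E x y}"
proof -
  have "{u \<in> V. reachable V E v u} = {(x, y). reachable V E x y} `` {v}" for v
    by (auto dest: reachable_in_V)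
  then show ?thesis unfolding components_def quotient_def by auto
qed

lemma equiv_reachable: "equiv V {(x, y). reachable V E x y}"
  by (rule equivI) (auto simp: refl_on_def sym_def trans_def
      intro: reachable_refl reachable_sym reachable_trans dest: reachable_in_V)

lemma two_components_partition:
  assumes "components V E = {X, Y}" "X \<noteq> Y"
  shows "X \<union> Y = V" "X \<inter> Y = {}"
  using Union_quotient[OF equiv_reachable[of V E]] quotient_disj[OF equiv_reachable[of V E], of X Y]
  by (simp_all add: assms components_eq_quotient[symmetric])

lemma component_edge_closed:
  assumes "X \<in> components V E" "x \<in> X" "y \<in> V" "{x, y} \<in> E"
  shows "y \<in> X"
  using assms reachable_in_V unfolding components_def
  by (auto intro: reachable_trans reachable_edge)

lemma dist_le_walk:
  assumes "walk V E p" shows "dist V E (hd p) (last p) \<le> length p - 1"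
  unfolding dist_def using assms by (intro Least_le) (auto simp: walk_def)

lemma shortest_path_exists:
  assumes "reachable V E u v" obtains p where "shortest_path V E u v p"
proof -
  from assms obtain p where p: "walk V E p" "hd p = u" "last p = v"
    by (auto simp: reachable_def)
  then have "\<exists>n q. walk V E q \<and> hd q = u \<and> last q = v \<and> length q = Suc n"
    by (intro exI[of _ "length p - 1"] exI[of _ p]) (auto simp: walk_def)
  then have "\<exists>q. walk V E q \<and> hd q = u \<and> last q = v \<and> length q = Suc (dist V E u v)"
    unfolding dist_def by (rule LeastI_ex)
  then show ?thesis using that by (auto simp: shortest_path_def)
qed

lemma shortest_path_distinct:
  assumes sp: "shortest_path V E u v p" shows "distinct p"
proof (rule ccontr)
  assume "\<not> distinct p"
  then obtain i j where ij: "i < j" "j < length p" "p ! i = p ! j"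
    by (metis distinct_conv_nth linorder_neqE_nat)
  have p: "walk V E p" "hd p = u" "last p = v" "length p = Suc (dist V E u v)"
    using sp by (auto simp: shortest_path_def)
  have tl_drop_j: "tl (drop j p) = drop (Suc j) p"
    by (simp add: drop_Suc tl_drop)
  define q where "q = take (Suc i) p @ drop (Suc j) p"
  have q: "walk V E q"
    unfolding q_def tl_drop_j[symmetric] using ij p(1)
    by (intro walk_append walk_take walk_drop) (auto simp: take_Suc_conv_app_nth hd_drop_conv_nth)
  have "hd q = u"
    using ij p(2) by (cases p) (auto simp: q_def)
  moreover have "last q = v"
  proof (cases "Suc j = length p")
    case True
    then have "last p = p ! j"
      by (metis diff_Suc_1 last_conv_nth list.size(3) nat.distinct(1))
    then show ?thesis
      using True ij p(3) by (simp add: q_def take_Suc_conv_app_nth)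
  next
    case False
    then show ?thesis
      using ij p(3) by (simp add: q_def)
  qed
  ultimately have "dist V E u v \<le> length q - 1"
    using dist_le_walk[OF q] by simp
  moreover have "0 < length q" "length q < length p"
    using ij by (auto simp: q_def)
  ultimately show False
    using p(4) by linarith
qed

section \<open>Mirror cuts\<close>

locale mirror_cut =
  fixes V :: "'a set" and E :: "'a set set" and \<alpha> :: "'a \<Rightarrow> 'a" and A B :: "'a set"
  assumes automorphism: "automorphism V E \<alpha>"
    and cover: "A \<union> B = V"
    and disjoint: "A \<inter> B = {}"
    and image_A: "\<alpha> ` A = B"
    and swaps_crossing_edge: "{x, y} \<in> E \<Longrightarrow> x \<in> A \<Longrightarrow> y \<in> B \<Longrightarrow> \<alpha> x = y \<and> \<alpha> y = x"
begin

lemma image_B: "\<alpha> ` B = A"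
proof -
  have "inj_on \<alpha> V" "\<alpha> ` V = V"
    using automorphism by (auto simp: automorphism_def bij_betw_def)
  moreover have "B = V - A" "A \<subseteq> V"
    using cover disjoint by auto
  ultimately have "\<alpha> ` B = V - B"
    using image_A by (simp add: inj_on_image_set_diff)
  then show ?thesis
    using cover disjoint by auto
qed

lemma swap: "mirror_cut V E \<alpha> B A"
  by unfold_locales
    (use automorphism cover disjoint image_B swaps_crossing_edge in \<open>auto simp: insert_commute\<close>)

end

lemma mirror_cut_of_class:
  assumes aut: "automorphism V E \<alpha>" and swaps: "\<forall>u v. {u, v} \<in> F \<longrightarrow> \<alpha> u = v"
    and halves: "C1 \<noteq> C2" "components V (E - F) = {C1, C2}" "\<alpha> ` C1 = C2"
  shows "mirror_cut V E \<alpha> C1 C2"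
proof -
  have cover: "C1 \<union> C2 = V" and disj: "C1 \<inter> C2 = {}"
    using two_components_partition[OF halves(2,1)] by auto
  have "{x, y} \<in> F" if "{x, y} \<in> E" "x \<in> C1" "y \<in> C2" for x y
    using component_edge_closed[of C1 V "E - F" x y] that halves cover disj by auto
  then show ?thesis
    by unfold_locales (use aut cover disj halves(3) swaps in \<open>auto simp: insert_commute\<close>)
qed

lemma mirror_graph_edge_cut:
  assumes mg: "mirror_graph V E" and e: "{b, c} \<in> E"
  obtains \<alpha> A B where "mirror_cut V E \<alpha> A B" "b \<in> A" "c \<in> B"
proof -
  from mg obtain P where P: "partition_on E P" and
    H: "\<forall>F\<in>P. \<exists>\<alpha>. automorphism V E \<alpha> \<and> (\<forall>u v. {u, v} \<in> F \<longrightarrow> \<alpha> u = v) \<and>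
           (\<exists>C1 C2. C1 \<noteq> C2 \<and> components V (E - F) = {C1, C2} \<and> \<alpha> ` C1 = C2)"
    unfolding mirror_graph_def by blast
  from P e obtain F where F: "F \<in> P" "{b, c} \<in> F"
    unfolding partition_on_def by blast
  obtain \<alpha> where aut: "automorphism V E \<alpha>" and swaps: "\<forall>u v. {u, v} \<in> F \<longrightarrow> \<alpha> u = v"
    and "\<exists>C1 C2. C1 \<noteq> C2 \<and> components V (E - F) = {C1, C2} \<and> \<alpha> ` C1 = C2"
    using bspec[OF H F(1)] by meson
  then obtain C1 C2 where halves: "C1 \<noteq> C2" "components V (E - F) = {C1, C2}" "\<alpha> ` C1 = C2"
    by (elim exE conjE) (rule that)
  have cut: "mirror_cut V E \<alpha> C1 C2"
    using mirror_cut_of_class[OF aut swaps halves] .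
  have "\<alpha> b = c"
    using swaps F(2) by blast
  have "simple_graph V E"
    using mg by (simp add: mirror_graph_def)
  then have "b \<in> V"
    using e by (auto simp: simple_graph_def doubleton_eq_iff)
  then consider "b \<in> C1" | "b \<in> C2"
    using mirror_cut.cover[OF cut] by blast
  then show ?thesis
  proof cases
    case 1
    then show ?thesis
      using that[OF cut] halves(3) \<open>\<alpha> b = c\<close> by blast
  next
    case 2
    then show ?thesis
      using that[OF mirror_cut.swap[OF cut]] mirror_cut.image_B[OF cut] \<open>\<alpha> b = c\<close> by blast
  qed
qed

section \<open>Convex cycles as periodic vertex sequences\<close>

lemma range_shift: "range (\<lambda>j. f (c + j)) = range (f :: 'a::group_add \<Rightarrow> 'b)"
  using image_image[of f "(+) c" UNIV] by simp

lemma range_reflect: "range (\<lambda>j. f (c - j)) = range (f :: 'a::group_add \<Rightarrow> 'b)"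
  using image_image[of f "(-) c" UNIV] by simp

text \<open>\<open>min d (m - d)\<close> is the distance from \<open>0\<close> to \<open>d\<close> on a cycle of length \<open>m\<close>.\<close>

lemma min_le_abs_if_dvd_diff:
  fixes m d s :: int
  assumes "m dvd (d - s)" "0 \<le> d" "d \<le> m"
  shows "min d (m - d) \<le> \<bar>s\<bar>"
proof -
  obtain t where t: "d - s = m * t"
    using assms(1) by (elim dvdE)
  consider "t \<le> 0" | "t = 1" | "2 \<le> t"
    by linarith
  then show ?thesis
  proof cases
    case 1
    then have "m * t \<le> 0"
      using assms(2,3) by (simp add: mult_nonneg_nonpos)
    then show ?thesis
      using t by linarith
  next
    case 3
    then have "m * 2 \<le> m * t"
      using assms(2,3) by (intro mult_left_mono) auto
    then show ?thesis
      using t assms(2) by linarith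
  qed (use t in simp)
qed

text \<open>A cycle of length \<open>m\<close> is represented by the \<open>m\<close>-periodic sequence \<open>z\<close> of its vertices,
  indexed by the integers so that it can be shifted and reflected freely; \<open>EC\<close> is its edge set.\<close>

locale convex_periodic_cycle =
  fixes V :: "'a set" and E :: "'a set set" and m :: int and z :: "int \<Rightarrow> 'a"
    and EC :: "'a set set"
  assumes connected: "connected_graph V E"
    and period_ge_3: "3 \<le> m"
    and z_eq_iff: "z j = z k \<longleftrightarrow> m dvd (j - k)"
    and EC_eq: "EC = range (\<lambda>j. {z j, z (j + 1)})"
    and z_in_V: "z j \<in> V"
    and EC_subset: "EC \<subseteq> E"
    and convex: "u \<in> range z \<Longrightarrow> v \<in> range z \<Longrightarrow> shortest_path V E u v p \<Longrightarrow>
      Suc i < length p \<Longrightarrow> {p ! i, p ! Suc i} \<in> EC"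
begin

lemma shift: "convex_periodic_cycle V E m (\<lambda>j. z (c + j)) EC"
proof unfold_locales
  show "EC = range (\<lambda>j. {z (c + j), z (c + (j + 1))})"
    using range_shift[of "\<lambda>j. {z j, z (j + 1)}" c] by (simp add: EC_eq add.assoc)
  show "{p ! i, p ! Suc i} \<in> EC"
    if "u \<in> range (\<lambda>j. z (c + j))" "v \<in> range (\<lambda>j. z (c + j))" "shortest_path V E u v p"
      "Suc i < length p" for u v p i
    using convex that range_shift[of z c] by simp
qed (use connected period_ge_3 z_eq_iff z_in_V EC_subset in auto)

lemma reflect: "convex_periodic_cycle V E m (\<lambda>j. z (c - j)) EC"
proof unfold_locales
  show "z (c - j) = z (c - k) \<longleftrightarrow> m dvd (j - k)" for j k
    using z_eq_iff[of "c - j" "c - k"] dvd_diff_commute by simp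
  show "EC = range (\<lambda>j. {z (c - j), z (c - (j + 1))})"
  proof -
    have "{z (c - j), z (c - (j + 1))} = {z (c - 1 - j), z (c - 1 - j + 1)}" for j
      by (simp add: insert_commute diff_diff_eq add.commute)
    then show ?thesis
      using range_reflect[of "\<lambda>j. {z j, z (j + 1)}" "c - 1"] by (simp add: EC_eq)
  qed
  show "{p ! i, p ! Suc i} \<in> EC"
    if "u \<in> range (\<lambda>j. z (c - j))" "v \<in> range (\<lambda>j. z (c - j))" "shortest_path V E u v p"
      "Suc i < length p" for u v p i
    using convex that range_reflect[of z c] by simp
qed (use connected period_ge_3 z_eq_iff z_in_V EC_subset in auto)

lemma edge: "{z j, z (j + 1)} \<in> EC"
  by (auto simp: EC_eq)

lemma edge_in_E: "{z j, z (j + 1)} \<in> E"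
  using edge EC_subset by blast

lemma neighbours_distinct: "z (j - 1) \<noteq> z (j + 1)" "z j \<noteq> z (j + 1)"
  using period_ge_3 by (auto simp: z_eq_iff dest: zdvd_imp_le)

lemma edge_iff: "{z j, w} \<in> EC \<longleftrightarrow> w = z (j - 1) \<or> w = z (j + 1)"
proof
  assume "{z j, w} \<in> EC"
  then obtain t where "{z j, w} = {z t, z (t + 1)}" by (auto simp: EC_eq)
  then have "z j = z t \<and> w = z (t + 1) \<or> z j = z (t + 1) \<and> w = z t"
    by (simp add: doubleton_eq_iff)
  then show "w = z (j - 1) \<or> w = z (j + 1)"
  proof
    assume "z j = z t \<and> w = z (t + 1)"
    then show ?thesis
      using z_eq_iff[of j t] z_eq_iff[of "j + 1" "t + 1"] by auto
  next
    assume "z j = z (t + 1) \<and> w = z t"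
    then show ?thesis
      using z_eq_iff[of j "t + 1"] z_eq_iff[of "j - 1" t] by (auto simp: algebra_simps)
  qed
next
  assume "w = z (j - 1) \<or> w = z (j + 1)"
  then show "{z j, w} \<in> EC"
    using edge[of "j - 1"] edge[of j] by (auto simp: insert_commute)
qed

lemma two_path_normal_form:
  assumes "{a, b} \<in> EC" "{b, c} \<in> EC" "a \<noteq> c"
  obtains y where "convex_periodic_cycle V E m y EC" "y (- 1) = a" "y 0 = b" "y 1 = c"
proof -
  obtain t where "{b, c} = {z t, z (t + 1)}"
    using assms(2) by (auto simp: EC_eq)
  then obtain j where j: "b = z j" "c = z (j - 1) \<or> c = z (j + 1)"
    by (auto simp: doubleton_eq_iff)
  moreover have "a = z (j - 1) \<or> a = z (j + 1)"
    using assms(1) j(1) edge_iff by (simp add: insert_commute)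
  ultimately consider "a = z (j - 1)" "c = z (j + 1)" | "a = z (j + 1)" "c = z (j - 1)"
    using assms(3) by auto
  then show ?thesis
  proof cases
    case 1
    then show ?thesis
      using that[OF shift[of j]] j(1) by simp
  next
    case 2
    then show ?thesis
      using that[OF reflect[of j]] j(1) by simp
  qed
qed

lemma edge_endpoints:
  assumes "e \<in> EC" obtains x y where "e = {x, y}" "x \<noteq> y" "x \<in> range z" "y \<in> range z"
  using assms neighbours_distinct(2) that by (auto simp: EC_eq)

lemma EC_subset_range: "e \<in> EC \<Longrightarrow> e \<subseteq> range z"
  by (auto simp: EC_eq)

lemma shortest_path_walk_on_cycle:
  assumes "u \<in> range z" "v \<in> range z" "shortest_path V E u v p"
  shows "walk (range z) EC p"
  unfolding walk_def
proof (intro conjI allI impI subsetI)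
  have p: "p \<noteq> []" "last p = v"
    using assms(3) by (auto simp: shortest_path_def walk_def)
  show "p \<noteq> []"
    using p by simp
  show edges: "{p ! i, p ! Suc i} \<in> EC" if "Suc i < length p" for i
    using convex assms that by blast
  fix x
  assume "x \<in> set p"
  then obtain i where i: "i < length p" "x = p ! i"
    by (auto simp: in_set_conv_nth)
  show "x \<in> range z"
  proof (cases "Suc i < length p")
    case True
    then show ?thesis
      using edges EC_subset_range i(2) by blast
  next
    case False
    then have "i = length p - 1"
      using i by simp
    then have "x = last p"
      using i p(1) by (simp add: last_conv_nth)
    then show ?thesis
      using p assms(2) by simp
  qed
qed

lemma displacement_of_walk:
  assumes "walk (range z) EC p" "hd p = z x" "last p = z y"
  shows "\<exists>s. \<bar>s\<bar> \<le> int (length p) - 1 \<and> m dvd (y - x - s)"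
  using assms
proof (induction p arbitrary: x rule: induct_list012)
  case (2 a)
  then show ?case
    using z_eq_iff[of x y] by (intro exI[of _ 0]) (simp add: dvd_diff_commute)
next
  case (3 a b l)
  then have "{z x, b} \<in> EC" "walk (range z) EC (b # l)"
    by (simp_all add: walk_Cons_Cons)
  then obtain e where e: "b = z (x + e)" "\<bar>e\<bar> = 1"
    using edge_iff by (metis abs_minus abs_one diff_conv_add_uminus)
  then obtain s where "\<bar>s\<bar> \<le> int (length (b # l)) - 1" "m dvd (y - (x + e) - s)"
    using "3.IH"(2)[of "x + e"] "3.prems" \<open>walk (range z) EC (b # l)\<close> by auto
  then show ?case
    using e by (intro exI[of _ "s + e"]) (auto simp: algebra_simps)
qed (simp add: walk_def)

lemma cyclic_dist_le_dist:
  assumes "0 \<le> y - x" "y - x \<le> m"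
  shows "min (y - x) (m - (y - x)) \<le> int (dist V E (z x) (z y))"
proof -
  have "reachable V E (z x) (z y)"
    using connected z_in_V by (simp add: connected_graph_def)
  then obtain p where p: "shortest_path V E (z x) (z y) p"
    by (rule shortest_path_exists)
  then have "walk (range z) EC p"
    by (intro shortest_path_walk_on_cycle) auto
  moreover have "hd p = z x" "last p = z y" "length p = Suc (dist V E (z x) (z y))"
    using p by (simp_all add: shortest_path_def)
  ultimately obtain s where "\<bar>s\<bar> \<le> int (dist V E (z x) (z y))" "m dvd (y - x - s)"
    using displacement_of_walk by fastforce
  then show ?thesis
    using min_le_abs_if_dvd_diff[of m "y - x" s] assms by linarith
qed

lemma walk_arc:
  assumes "0 < L" shows "walk V E (map (\<lambda>n. z (c + int n)) [0..<L])"
proof -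
  have "{z (c + int i), z (c + int (Suc i))} \<in> E" for i
    using edge_in_E[of "c + int i"] by (simp add: ac_simps)
  then show ?thesis
    unfolding walk_def using assms z_in_V by auto
qed

lemma crossing_arc:
  assumes cut: "mirror_cut V E \<alpha> A B" and "z 0 \<in> A" "z 1 \<in> B"
  obtains k :: nat where "1 \<le> k" "int k < m" "\<forall>i. 1 \<le> i \<and> i \<le> int k \<longrightarrow> z i \<in> B"
    "z (int k + 1) \<in> A"
proof -
  define returns where "returns n \<longleftrightarrow> 1 \<le> n \<and> z (int n + 1) \<in> A" for n :: nat
  have "z (int (nat (m - 1)) + 1) = z 0"
    using period_ge_3 z_eq_iff by simp
  then have "returns (nat (m - 1))"
    using assms period_ge_3 by (simp add: returns_def)
  define k where "k = (LEAST n. returns n)"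
  have "returns k" "k \<le> nat (m - 1)"
    unfolding k_def using \<open>returns (nat (m - 1))\<close> by (auto intro: LeastI Least_le)
  moreover have "z i \<in> B" if "1 \<le> i" "i \<le> int k" for i
  proof (cases "i = 1")
    case False
    then have "\<not> returns (nat (i - 1))"
      using that unfolding k_def by (intro not_less_Least) auto
    then show ?thesis
      using that False z_in_V mirror_cut.cover[OF cut] by (auto simp: returns_def)
  qed (use assms in simp)
  ultimately show ?thesis
    using that by (auto simp: returns_def)
qed

lemma crossing_arc_at_least_half:
  assumes cut: "mirror_cut V E \<alpha> A B" and "z 0 \<in> A"
    and k: "1 \<le> k" "int k < m" "\<forall>i. 1 \<le> i \<and> i \<le> int k \<longrightarrow> z i \<in> B" "z (int k + 1) \<in> A"
  shows "m \<le> 2 * int k"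
proof -
  have "\<alpha> (z 1) = z 0" "\<alpha> (z (int k)) = z (int k + 1)"
    using mirror_cut.swaps_crossing_edge[OF cut] edge_in_E[of 0] edge_in_E[of "int k"] assms
    by (auto simp: insert_commute)
  define W where "W = map \<alpha> (map (\<lambda>n. z (1 + int n)) [0..<k])"
  have "walk V E W"
    unfolding W_def using k(1) mirror_cut.automorphism[OF cut]
    by (intro walk_map_automorphism walk_arc) auto
  moreover have "hd W = z 0" "last W = z (int k + 1)" "length W = k"
    using k(1) \<open>\<alpha> (z 1) = z 0\<close> \<open>\<alpha> (z (int k)) = z (int k + 1)\<close>
    by (auto simp: W_def hd_map last_map)
  ultimately have "dist V E (z 0) (z (int k + 1)) \<le> k - 1"
    using dist_le_walk by fastforce
  then show ?thesis
    using cyclic_dist_le_dist[where x = 0 and y = "int k + 1"] k(1,2) by simp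
qed

lemma antipodal_crossings:
  assumes cut: "mirror_cut V E \<alpha> A B" and "z 0 \<in> A" "z 1 \<in> B"
  obtains k :: nat where "2 \<le> k" "m = 2 * int k" "z (1 - int k) \<in> A" "z (- int k) \<in> B"
proof -
  obtain l where l: "1 \<le> l" "int l < m" "\<forall>i. 1 \<le> i \<and> i \<le> int l \<longrightarrow> z i \<in> B"
    "z (int l + 1) \<in> A"
    using crossing_arc[OF assms] .
  have "m \<le> 2 * int l"
    using crossing_arc_at_least_half[OF cut assms(2) l] .
  interpret reflected: convex_periodic_cycle V E m "\<lambda>i. z (1 - i)" EC
    by (rule reflect)
  have cut': "mirror_cut V E \<alpha> B A"
    by (rule mirror_cut.swap[OF cut])
  obtain k where k: "1 \<le> k" "int k < m" "\<forall>i. 1 \<le> i \<and> i \<le> int k \<longrightarrow> z (1 - i) \<in> A"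
    "z (1 - (int k + 1)) \<in> B"
    using reflected.crossing_arc[OF cut'] assms by auto
  have "m \<le> 2 * int k"
    using reflected.crossing_arc_at_least_half[OF cut' _ k] assms by simp
  have zA: "z (1 - int k) \<in> A"
    using k(1) k(3)[rule_format, of "int k"] by simp
  \<comment> \<open>the arc in \<open>B\<close> after \<open>z 0\<close> and the arc in \<open>A\<close> up to \<open>z 0\<close> are disjoint\<close>
  have "int l + int k \<le> m"
  proof (rule ccontr)
    assume "\<not> int l + int k \<le> m"
    then have "z (m + 1 - int k) \<in> B"
      using l(3) k(2) by simp
    moreover have "z (m + 1 - int k) = z (1 - int k)"
      by (simp add: z_eq_iff)
    ultimately show False
      using zA mirror_cut.disjoint[OF cut] by auto
  qed
  then have "m = 2 * int k" "2 \<le> k"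
    using \<open>m \<le> 2 * int l\<close> \<open>m \<le> 2 * int k\<close> period_ge_3 by linarith+
  then show ?thesis
    using that zA k(4) by simp
qed

lemma mirror_neighbour_on_cycle:
  assumes cut: "mirror_cut V E \<alpha> A B" and "z 0 \<in> A" "z 1 \<in> B"
  shows "{z 1, \<alpha> (z (- 1))} \<in> EC"
proof -
  obtain k where k: "2 \<le> k" "m = 2 * int k" "z (1 - int k) \<in> A" "z (- int k) \<in> B"
    using antipodal_crossings[OF assms] .
  have "\<alpha> (z (1 - int k)) = z (- int k)" "\<alpha> (z 0) = z 1"
    using mirror_cut.swaps_crossing_edge[OF cut] edge_in_E[of "- int k"] edge_in_E[of 0] assms k
    by (auto simp: insert_commute)
  define W where "W = map \<alpha> (map (\<lambda>n. z (1 - int k + int n)) [0..<k])"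
  have walk: "walk V E W"
    unfolding W_def using k(1) mirror_cut.automorphism[OF cut]
    by (intro walk_map_automorphism walk_arc) auto
  have W: "hd W = z (- int k)" "last W = z 1" "length W = k"
    using k(1) \<open>\<alpha> (z 0) = z 1\<close> \<open>\<alpha> (z (1 - int k)) = z (- int k)\<close>
    by (auto simp: W_def hd_map last_map)
  \<comment> \<open>by antipodality, the ends of \<open>W\<close> are \<open>k - 1\<close> apart along the cycle\<close>
  have "int k - 1 \<le> int (dist V E (z (- int k)) (z 1))"
    using cyclic_dist_le_dist[where x = "- int k" and y = 1] k(1,2) by simp
  then have "dist V E (z (- int k)) (z 1) = k - 1"
    using dist_le_walk[OF walk] W k(1) by simp
  then have "shortest_path V E (z (- int k)) (z 1) W"
    using walk W k(1) by (simp add: shortest_path_def)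
  then have "{W ! (k - 2), W ! Suc (k - 2)} \<in> EC"
    using convex[OF rangeI rangeI] W(3) k(1) by simp
  moreover have "W ! (k - 2) = \<alpha> (z (- 1))" "W ! Suc (k - 2) = z 1"
    using k(1) \<open>\<alpha> (z 0) = z 1\<close> by (auto simp: W_def)
  ultimately show ?thesis
    by (simp add: insert_commute)
qed

lemma mirror_image_edge:
  assumes cut: "mirror_cut V E \<alpha> A B"
    and "{a, b} \<in> EC" "{b, c} \<in> EC" "a \<noteq> c" "b \<in> A" "c \<in> B"
  shows "{c, \<alpha> a} \<in> EC"
proof -
  obtain y where "convex_periodic_cycle V E m y EC" "y (- 1) = a" "y 0 = b" "y 1 = c"
    using two_path_normal_form[OF assms(2-4)] .
  then show ?thesis
    using convex_periodic_cycle.mirror_neighbour_on_cycle[OF _ cut] assms(5,6) by metis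
qed

lemma shared_path_extends:
  assumes mg: "mirror_graph V E" and D: "convex_periodic_cycle V E m' z' ED"
    and "{a, b} \<in> EC \<inter> ED" "{b, c} \<in> EC \<inter> ED" "a \<noteq> c"
  obtains d where "d \<noteq> b" "{c, d} \<in> EC \<inter> ED"
proof -
  obtain \<alpha> A B where cut: "mirror_cut V E \<alpha> A B" "b \<in> A" "c \<in> B"
    using mirror_graph_edge_cut[OF mg] assms(4) EC_subset by blast
  have "{c, \<alpha> a} \<in> EC \<inter> ED"
    using mirror_image_edge[OF cut(1)] convex_periodic_cycle.mirror_image_edge[OF D cut(1)]
      assms(3-5) cut(2,3) by blast
  moreover have "\<alpha> a \<noteq> b"
  proof
    assume "\<alpha> a = b"
    moreover have "\<alpha> c = b"
      using mirror_cut.swaps_crossing_edge[OF cut(1)] assms(4) EC_subset cut(2,3) by blast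
    moreover have "a \<in> V" "c \<in> V"
      using EC_subset_range assms(3,4) z_in_V by blast+
    ultimately show False
      using mirror_cut.automorphism[OF cut(1)] assms(5)
      by (auto simp: automorphism_def bij_betw_def inj_on_def)
  qed
  ultimately show ?thesis
    using that by blast
qed

lemma shared_path_propagates:
  assumes mg: "mirror_graph V E" and D: "convex_periodic_cycle V E m' z' ED"
    and "{z (- 1), z 0} \<in> ED" "{z 0, z 1} \<in> ED"
  shows "EC \<subseteq> ED"
proof -
  have shared: "{z (int n - 1), z (int n)} \<in> ED \<and> {z (int n), z (int n + 1)} \<in> ED" for n :: nat
  proof (induction n)
    case 0
    then show ?case using assms(3,4) by simp
  next
    case (Suc n)
    obtain d where d: "d \<noteq> z (int n)" "{z (int n + 1), d} \<in> EC \<inter> ED"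
      using shared_path_extends[OF mg D, of "z (int n - 1)" "z (int n)" "z (int n + 1)"]
        Suc.IH edge[of "int n - 1"] edge[of "int n"] neighbours_distinct(1)[of "int n"] by auto
    then have "d = z (int (Suc n) + 1)"
      using edge_iff[of "int n + 1" d] by (auto simp: ac_simps)
    then show ?case
      using Suc.IH d(2) by (simp add: add.commute)
  qed
  show ?thesis
  proof
    fix e assume "e \<in> EC"
    then obtain j where j: "e = {z j, z (j + 1)}"
      by (auto simp: EC_eq)
    have "m dvd (j - j mod m)" "j mod m = int (nat (j mod m))"
      using period_ge_3 by (simp_all add: mod_0_imp_dvd minus_mod_eq_mult_div[symmetric])
    then have "e = {z (int (nat (j mod m))), z (int (nat (j mod m)) + 1)}"
      using j z_eq_iff by (metis add_diff_cancel_right)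
    then show "e \<in> ED"
      using shared by blast
  qed
qed

lemma shared_path_edges_subset:
  assumes mg: "mirror_graph V E" and D: "convex_periodic_cycle V E m' z' ED"
    and "{u, v} \<in> EC \<inter> ED" "{v, w} \<in> EC \<inter> ED" "u \<noteq> w"
  shows "EC \<subseteq> ED"
proof -
  obtain y where "convex_periodic_cycle V E m y EC" "y (- 1) = u" "y 0 = v" "y 1 = w"
    using two_path_normal_form assms(3-5) by blast
  then show ?thesis
    using convex_periodic_cycle.shared_path_propagates[OF _ mg D] assms(3,4) by (metis IntD2)
qed

end

section \<open>Two convex cycles in a mirror graph\<close>

lemma convex_cycles_no_shared_path:
  assumes mg: "mirror_graph V E"
    and C: "convex_periodic_cycle V E m z EC" and D: "convex_periodic_cycle V E m' z' ED"
    and "EC \<noteq> ED" "{u, v} \<in> EC \<inter> ED" "{v, w} \<in> EC \<inter> ED"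
  shows "u = w"
proof (rule ccontr)
  assume "u \<noteq> w"
  have "EC \<subseteq> ED"
    using convex_periodic_cycle.shared_path_edges_subset[OF C mg D assms(5,6) \<open>u \<noteq> w\<close>] .
  moreover have "ED \<subseteq> EC"
    using convex_periodic_cycle.shared_path_edges_subset[OF D mg C] assms(5,6) \<open>u \<noteq> w\<close>
    by (simp add: Int_commute)
  ultimately show False
    using assms(4) by simp
qed

lemma convex_cycles_common_vertices_adjacent:
  assumes mg: "mirror_graph V E"
    and C: "convex_periodic_cycle V E m z EC" and D: "convex_periodic_cycle V E m' z' ED"
    and "EC \<noteq> ED" "u \<in> range z \<inter> range z'" "v \<in> range z \<inter> range z'" "u \<noteq> v"
  shows "{u, v} \<in> EC \<inter> ED"
proof -
  have "reachable V E u v"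
    using convex_periodic_cycle.connected[OF C] convex_periodic_cycle.z_in_V[OF C] assms(5,6)
    by (auto simp: connected_graph_def)
  then obtain p where p: "shortest_path V E u v p"
    by (rule shortest_path_exists)
  then have "walk (range z) EC p" "walk (range z') ED p"
    using convex_periodic_cycle.shortest_path_walk_on_cycle[OF C]
      convex_periodic_cycle.shortest_path_walk_on_cycle[OF D] assms(5,6) by blast+
  then have shared: "{p ! i, p ! Suc i} \<in> EC \<inter> ED" if "Suc i < length p" for i
    using that by (simp add: walk_def)
  have "hd p = u" "last p = v" "p \<noteq> []"
    using p by (auto simp: shortest_path_def walk_def)
  moreover have "length p \<noteq> 1"
  proof
    assume "length p = 1"
    then obtain x where "p = [x]"
      by (auto simp: length_Suc_conv)
    then show False
      using \<open>hd p = u\<close> \<open>last p = v\<close> assms(7) by simp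
  qed
  ultimately have "2 \<le> length p"
    using length_greater_0_conv[of p] by linarith
  moreover have "\<not> 2 < length p"
  proof
    assume "2 < length p"
    then have "p ! 0 \<noteq> p ! 2"
      using nth_eq_iff_index_eq[OF shortest_path_distinct[OF p], of 0 2] \<open>p \<noteq> []\<close> by simp
    moreover have "{p ! 0, p ! 1} \<in> EC \<inter> ED" "{p ! 1, p ! 2} \<in> EC \<inter> ED"
      using shared[of 0] shared[of 1] \<open>2 < length p\<close> by (simp_all add: numeral_2_eq_2)
    ultimately show False
      using convex_cycles_no_shared_path[OF mg C D assms(4)] by blast
  qed
  ultimately have "length p = 2"
    by simp
  then have "p ! 0 = u" "p ! 1 = v"
    using \<open>hd p = u\<close> \<open>last p = v\<close> \<open>p \<noteq> []\<close> by (simp_all add: hd_conv_nth last_conv_nth)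
  then show ?thesis
    using shared[of 0] \<open>length p = 2\<close> by simp
qed

lemma convex_cycles_meet_in_edge:
  assumes mg: "mirror_graph V E"
    and C: "convex_periodic_cycle V E m z EC" and D: "convex_periodic_cycle V E m' z' ED"
    and "EC \<noteq> ED" "u \<in> range z \<inter> range z'" "v \<in> range z \<inter> range z'" "u \<noteq> v"
  shows "range z \<inter> range z' = {u, v}" "EC \<inter> ED = {{u, v}}"
proof -
  note adjacent = convex_cycles_common_vertices_adjacent[OF mg C D assms(4)]
  have uv: "{u, v} \<in> EC \<inter> ED"
    using adjacent[OF assms(5-7)] .
  show common: "range z \<inter> range z' = {u, v}"
  proof (intro equalityI subsetI)
    fix w assume w: "w \<in> range z \<inter> range z'"
    show "w \<in> {u, v}"
    proof (rule ccontr)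
      assume "w \<notin> {u, v}"
      then have "{v, w} \<in> EC \<inter> ED"
        using adjacent[OF assms(6) w] by blast
      then show False
        using convex_cycles_no_shared_path[OF mg C D assms(4) uv] \<open>w \<notin> {u, v}\<close> by blast
    qed
  qed (use assms(5,6) in blast)
  show "EC \<inter> ED = {{u, v}}"
  proof (intro equalityI subsetI)
    fix e assume e: "e \<in> EC \<inter> ED"
    then obtain x y where "e = {x, y}" "x \<noteq> y" "x \<in> range z" "y \<in> range z"
      using convex_periodic_cycle.edge_endpoints[OF C] by blast
    moreover have "e \<subseteq> range z'"
      using e convex_periodic_cycle.EC_subset_range[OF D] by blast
    ultimately have "x \<in> {u, v}" "y \<in> {u, v}" "x \<noteq> y" "e = {x, y}"
      using common by blast+
    then show "e \<in> {{u, v}}"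
      by auto
  qed (use uv in blast)
qed

section \<open>Cycles given as vertex lists\<close>

definition cyclic_nth :: "'a list \<Rightarrow> int \<Rightarrow> 'a" where
  "cyclic_nth xs j = xs ! nat (j mod int (length xs))"

lemma cyclic_nth_of_nat: "cyclic_nth xs (int i) = xs ! (i mod length xs)"
  by (simp add: cyclic_nth_def zmod_int[symmetric])

lemma cyclic_nth_mod: "cyclic_nth xs (j mod int (length xs)) = cyclic_nth xs j"
  by (simp add: cyclic_nth_def)

lemma cyclic_nth_in_set: "xs \<noteq> [] \<Longrightarrow> cyclic_nth xs j \<in> set xs"
  by (simp add: cyclic_nth_def nat_less_iff)

lemma range_cyclic_nth:
  assumes "xs \<noteq> []" shows "range (cyclic_nth xs) = set xs"
proof
  show "range (cyclic_nth xs) \<subseteq> set xs"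
    using cyclic_nth_in_set[OF assms] by blast
  show "set xs \<subseteq> range (cyclic_nth xs)"
  proof
    fix x assume "x \<in> set xs"
    then obtain i where "i < length xs" "x = xs ! i"
      by (auto simp: in_set_conv_nth)
    then have "x = cyclic_nth xs (int i)"
      by (simp add: cyclic_nth_of_nat)
    then show "x \<in> range (cyclic_nth xs)"
      by blast
  qed
qed

lemma cyclic_nth_eq_iff:
  assumes "distinct xs" "xs \<noteq> []"
  shows "cyclic_nth xs j = cyclic_nth xs k \<longleftrightarrow> int (length xs) dvd (j - k)"
proof -
  have "cyclic_nth xs j = cyclic_nth xs k \<longleftrightarrow> nat (j mod int (length xs)) = nat (k mod int (length xs))"
    unfolding cyclic_nth_def using assms by (intro nth_eq_iff_index_eq) (auto simp: nat_less_iff)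
  also have "\<dots> \<longleftrightarrow> j mod int (length xs) = k mod int (length xs)"
    using assms by (simp add: eq_nat_nat_iff)
  also have "\<dots> \<longleftrightarrow> int (length xs) dvd (j - k)"
    by (simp add: mod_eq_dvd_iff)
  finally show ?thesis .
qed

lemma cyclic_nth_conv_nth:
  assumes "xs \<noteq> []"
  obtains i where "i < length xs" "cyclic_nth xs j = xs ! i"
    "cyclic_nth xs (j + 1) = xs ! (Suc i mod length xs)"
proof -
  define i where "i = nat (j mod int (length xs))"
  have i: "i < length xs" "j mod int (length xs) = int i"
    using assms by (auto simp: i_def nat_less_iff)
  then have "(j + 1) mod int (length xs) = int (Suc i) mod int (length xs)"
    by (metis mod_add_left_eq of_nat_Suc add.commute)
  then have "cyclic_nth xs (j + 1) = cyclic_nth xs (int (Suc i))"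
    by (metis cyclic_nth_mod)
  moreover have "cyclic_nth xs j = cyclic_nth xs (int i)"
    by (metis i(2) cyclic_nth_mod)
  ultimately show ?thesis
    using that[of i] i(1) cyclic_nth_of_nat[of xs i] cyclic_nth_of_nat[of xs "Suc i"] by simp
qed

lemma cycle_edges_cyclic_nth:
  assumes "xs \<noteq> []"
  shows "cycle_edges xs = range (\<lambda>j. {cyclic_nth xs j, cyclic_nth xs (j + 1)})"
proof
  show "cycle_edges xs \<subseteq> range (\<lambda>j. {cyclic_nth xs j, cyclic_nth xs (j + 1)})"
  proof
    fix e assume "e \<in> cycle_edges xs"
    then obtain i where "i < length xs" "e = {xs ! i, xs ! ((i + 1) mod length xs)}"
      by (auto simp: cycle_edges_def)
    then have "e = {cyclic_nth xs (int i), cyclic_nth xs (int i + 1)}"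
      using cyclic_nth_of_nat[of xs i] cyclic_nth_of_nat[of xs "Suc i"] by (simp add: add.commute)
    then show "e \<in> range (\<lambda>j. {cyclic_nth xs j, cyclic_nth xs (j + 1)})"
      by blast
  qed
  show "range (\<lambda>j. {cyclic_nth xs j, cyclic_nth xs (j + 1)}) \<subseteq> cycle_edges xs"
  proof (rule image_subsetI)
    fix j
    obtain i where "i < length xs" "cyclic_nth xs j = xs ! i"
      "cyclic_nth xs (j + 1) = xs ! (Suc i mod length xs)"
      using cyclic_nth_conv_nth[OF assms] .
    then show "{cyclic_nth xs j, cyclic_nth xs (j + 1)} \<in> cycle_edges xs"
      unfolding cycle_edges_def by auto
  qed
qed

lemma convex_cycle_periodic:
  assumes "convex_cycle V E C" "connected_graph V E"
  shows "convex_periodic_cycle V E (int (length C)) (cyclic_nth C) (cycle_edges C)"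
proof -
  have C: "3 \<le> length C" "distinct C" "set C \<subseteq> V" "cycle_edges C \<subseteq> E"
    using assms(1) by (auto simp: convex_cycle_def is_cycle_def)
  then have "C \<noteq> []" by auto
  show ?thesis
  proof
    show "cycle_edges C = range (\<lambda>j. {cyclic_nth C j, cyclic_nth C (j + 1)})"
      using \<open>C \<noteq> []\<close> by (rule cycle_edges_cyclic_nth)
    show "cyclic_nth C j = cyclic_nth C k \<longleftrightarrow> int (length C) dvd (j - k)" for j k
      using C(2) \<open>C \<noteq> []\<close> by (rule cyclic_nth_eq_iff)
    show "cyclic_nth C j \<in> V" for j
      using cyclic_nth_in_set[OF \<open>C \<noteq> []\<close>] C(3) by blast
    show "{p ! i, p ! Suc i} \<in> cycle_edges C"
      if "u \<in> range (cyclic_nth C)" "v \<in> range (cyclic_nth C)" "shortest_path V E u v p"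
        "Suc i < length p" for u v p i
      using assms(1) that range_cyclic_nth[OF \<open>C \<noteq> []\<close>] by (auto simp: convex_cycle_def)
  qed (use assms(2) C in auto)
qed

theorem mainTheorem11:
  fixes V :: "'a set" and E :: "'a set set" and C D :: "'a list"
  assumes "mirror_graph V E"
    and "convex_cycle V E C" and "convex_cycle V E D"
    and "cycle_edges C \<noteq> cycle_edges D"
  shows "set C \<inter> set D = {} \<or> (\<exists>v. set C \<inter> set D = {v}) \<or>
         (\<exists>u v. set C \<inter> set D = {u, v} \<and> cycle_edges C \<inter> cycle_edges D = {{u, v}})"
proof -
  have "connected_graph V E"
    using assms(1) by (simp add: mirror_graph_def)
  then have C: "convex_periodic_cycle V E (int (length C)) (cyclic_nth C) (cycle_edges C)"
    and D: "convex_periodic_cycle V E (int (length D)) (cyclic_nth D) (cycle_edges D)"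
    using assms(2,3) by (simp_all add: convex_cycle_periodic)
  have "C \<noteq> []" "D \<noteq> []"
    using assms(2,3) by (auto simp: convex_cycle_def is_cycle_def)
  then have "range (cyclic_nth C) = set C" "range (cyclic_nth D) = set D"
    by (simp_all add: range_cyclic_nth)
  show ?thesis
  proof (cases "\<exists>u v. u \<in> set C \<inter> set D \<and> v \<in> set C \<inter> set D \<and> u \<noteq> v")
    case True
    then obtain u v where "u \<in> set C \<inter> set D" "v \<in> set C \<inter> set D" "u \<noteq> v"
      by blast
    then have "set C \<inter> set D = {u, v}" "cycle_edges C \<inter> cycle_edges D = {{u, v}}"
      using convex_cycles_meet_in_edge[OF assms(1) C D assms(4)] \<open>range (cyclic_nth C) = set C\<close>
        \<open>range (cyclic_nth D) = set D\<close> by simp_all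
    then show ?thesis
      by blast
  qed blast
qed

end
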